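(* Let $n \ge 2$ and let $K, L$ be compact convex subsets of $\mathbb{R}^n$. Suppose that for every unit vector $u$, the projection $L_u$ contains a translate of $K_u$. Then there exists $x \in \mathbb{R}^n$ such that $$K + x \subseteq \tfrac{n}{n-1} L.$$
   Context: For a set $S \subseteq \mathbb{R}^n$ and a unit vector $u$, $S_u$ denotes the orthogonal projection of $S$ onto the hyperplane $u^\perp$. "$A$ contains a translate of $B$" means $B+w\subseteq A$ for some vector $w$. For $c>0$, $cL=\{cy : y\in L\}$. *)

theory Defs
  imports "HOL-Analysis.Analysis"
begin

definition proj_hyp :: "'a::euclidean_space \<Rightarrow> 'a set \<Rightarrow> 'a set" where
  "proj_hyp u S = (\<lambda>y. y - (y \<bullet> u) *\<^sub>R u) ` S"

definition contains_translate :: "'a::real_vector set \<Rightarrow> 'a set \<Rightarrow> bool" where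
  "contains_translate A B \<longleftrightarrow> (\<exists>w. (\<lambda>y. y + w) ` B \<subseteq> A)"

end

theory Submission
  imports Defs
begin

text \<open>
  Let n = DIM('a) \<ge> 2, c = n / (n - 1) and C = c L.  By Helly's theorem and compactness
  (lemma translate_into_by_Helly) it suffices to translate any n + 1 points k 0, ..., k n of K
  simultaneously into C (lemma simplex_translates_into_scaled).  For this, choose x minimising
  \<Phi>(x) = \<Sum>i. dist(k i + x, C)^2, let p i = c q i be the points of C nearest to k i + x, and
  r i = k i + x - p i the residuals.  Minimality gives \<Sum>i. r i = 0, and q i maximises the
  functional \<langle>-, r i\<rangle> on L.  For a pair a \<noteq> b, the n vectors r i (i \<noteq> a, b) and
  r a + r b sum to zero, so they span at most n - 1 dimensions and lie in a hyperplane u^\<bottom>;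
  the hypothesis on the projection onto u^\<bottom> then bounds \<langle>k i, r i\<rangle> by the support numbers
  of L (lemma pair_inequality, with k a, k b replaced by their midpoint).  Averaging over all
  pairs (lemma pair_average) gives (n - 1) \<Sum>\<langle>k i, r i\<rangle> \<le> n \<Sum>\<langle>q i, r i\<rangle>, whereas
  c \<Sum>\<langle>q i, r i\<rangle> = \<Sum>\<langle>k i, r i\<rangle> - \<Phi>(x).  Together these force \<Phi>(x) = 0, i.e. all
  k i + x \<in> C (lemma balanced_residuals_vanish).
\<close>

text \<open>If the projection of L onto u^\<bottom> contains a translate (by w) of the projection of K, then
  for every y \<in> K and every f \<perp> u some l \<in> L satisfies \<langle>y + w, f\<rangle> = \<langle>l, f\<rangle>: projecting
  along u does not change inner products with f.\<close>
lemma translate_of_projection_inner: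
  fixes K L :: "'a::euclidean_space set"
  assumes "contains_translate (proj_hyp u L) (proj_hyp u K)"
  obtains w where "\<And>y f. y \<in> K \<Longrightarrow> f \<bullet> u = 0 \<Longrightarrow> \<exists>l\<in>L. y \<bullet> f + w \<bullet> f = l \<bullet> f"
proof -
  obtain w where w: "(\<lambda>y. y + w) ` proj_hyp u K \<subseteq> proj_hyp u L"
    using assms unfolding contains_translate_def by blast
  have "\<exists>l\<in>L. y \<bullet> f + w \<bullet> f = l \<bullet> f" if "y \<in> K" "f \<bullet> u = 0" for y f
  proof -
    have "(y - (y \<bullet> u) *\<^sub>R u) + w \<in> proj_hyp u L"
      using w that(1) unfolding proj_hyp_def by blast
    then obtain l where l: "l \<in> L" "(y - (y \<bullet> u) *\<^sub>R u) + w = l - (l \<bullet> u) *\<^sub>R u"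
      unfolding proj_hyp_def by blast
    have "((y - (y \<bullet> u) *\<^sub>R u) + w) \<bullet> f = (l - (l \<bullet> u) *\<^sub>R u) \<bullet> f"
      using l(2) by simp
    moreover have "u \<bullet> f = 0"
      using that(2) by (simp add: inner_commute)
    ultimately have "y \<bullet> f + w \<bullet> f = l \<bullet> f"
      by (simp add: inner_diff_left inner_add_left)
    then show ?thesis using l(1) by blast
  qed
  then show ?thesis using that by blast
qed

text \<open>Summed form of the projection hypothesis: for directions f j \<perp> u that sum to zero, the
  common shift w cancels, so \<Sum>\<langle>y j, f j\<rangle> is bounded by the sum of upper bounds h j of the
  functionals \<langle>-, f j\<rangle> on L.\<close>
lemma projection_sum_bound:
  fixes K L :: "'a::euclidean_space set" and f y :: "'i \<Rightarrow> 'a" and h :: "'i \<Rightarrow> real"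
  assumes hyp: "contains_translate (proj_hyp u L) (proj_hyp u K)"
    and orth: "\<And>j. j \<in> J \<Longrightarrow> f j \<bullet> u = 0" and balanced: "sum f J = 0"
    and yK: "\<And>j. j \<in> J \<Longrightarrow> y j \<in> K"
    and bound: "\<And>j l. j \<in> J \<Longrightarrow> l \<in> L \<Longrightarrow> l \<bullet> f j \<le> h j"
  shows "(\<Sum>j\<in>J. y j \<bullet> f j) \<le> sum h J"
proof -
  obtain w where w: "\<And>y f. y \<in> K \<Longrightarrow> f \<bullet> u = 0 \<Longrightarrow> \<exists>l\<in>L. y \<bullet> f + w \<bullet> f = l \<bullet> f"
    using translate_of_projection_inner[OF hyp] by blast
  have "y j \<bullet> f j + w \<bullet> f j \<le> h j" if "j \<in> J" for j
    using w[OF yK[OF that] orth[OF that]] bound[OF that] by force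
  then have "(\<Sum>j\<in>J. y j \<bullet> f j + w \<bullet> f j) \<le> sum h J"
    by (rule sum_mono)
  moreover have "(\<Sum>j\<in>J. w \<bullet> f j) = 0"
    using balanced by (simp add: inner_sum_right[symmetric])
  ultimately show ?thesis
    by (simp add: sum.distrib)
qed

lemma unit_vector_orthogonal_to_few:
  fixes v :: "'i \<Rightarrow> 'a::euclidean_space"
  assumes "finite D" and "card D < DIM('a)"
  obtains u where "norm u = 1" and "\<And>y. y \<in> span (v ` D) \<Longrightarrow> y \<bullet> u = 0"
proof -
  have "dim (v ` D) \<le> card (v ` D)"
    by (rule dim_le_card) (auto simp: assms(1) span_base)
  also have "\<dots> \<le> card D"
    using assms(1) by (rule card_image_le)
  finally have "dim (v ` D) < DIM('a)"
    using assms(2) by linarith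
  then obtain x where x: "x \<noteq> 0" "\<And>y. y \<in> span (v ` D) \<Longrightarrow> orthogonal x y"
    using orthogonal_to_subspace_exists by metis
  show ?thesis
  proof
    show "norm (x /\<^sub>R norm x) = 1"
      using x(1) by simp
    show "y \<bullet> (x /\<^sub>R norm x) = 0" if "y \<in> span (v ` D)" for y
      using x(2)[OF that] by (simp add: orthogonal_def inner_commute)
  qed
qed

lemma sum_split_pair:
  fixes g :: "nat \<Rightarrow> 'b::comm_monoid_add"
  assumes "a \<le> n" "b \<le> n" "a \<noteq> b"
  shows "sum g {..n} = g a + g b + sum g ({..n} - {a,b})"
    and "sum g ({..n} - {b}) = g a + sum g ({..n} - {a,b})"
proof -
  define D where "D = {..n} - {a,b}"
  have "{..n} = insert a (insert b D)" and "{..n} - {b} = insert a D"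
    using assms by (auto simp: D_def)
  moreover have "finite D" "a \<notin> insert b D" "b \<notin> D"
    using assms(3) by (auto simp: D_def)
  ultimately show "sum g {..n} = g a + g b + sum g ({..n} - {a,b})"
    and "sum g ({..n} - {b}) = g a + sum g ({..n} - {a,b})"
    unfolding D_def[symmetric] by (simp_all add: add.assoc)
qed

text \<open>The n vectors r i (i \<noteq> a, b) and r a + r b span at most
  n - 1 dimensions, so the projection hypothesis in an orthogonal direction applies to them.\<close>
lemma pair_inequality:
  fixes K L :: "'a::euclidean_space set" and k r q :: "nat \<Rightarrow> 'a"
  assumes n: "DIM('a) = n" and cK: "convex K" and kK: "\<And>i. i \<le> n \<Longrightarrow> k i \<in> K"
    and hyp: "\<And>u. norm u = 1 \<Longrightarrow> contains_translate (proj_hyp u L) (proj_hyp u K)"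
    and qmax: "\<And>i l. i \<le> n \<Longrightarrow> l \<in> L \<Longrightarrow> l \<bullet> r i \<le> q i \<bullet> r i"
    and balanced: "sum r {..n} = 0"
    and ab: "a \<le> n" "b \<le> n" "a \<noteq> b"
  shows "(\<Sum>i\<in>{..n}-{a,b}. k i \<bullet> r i) + ((1/2) *\<^sub>R (k a + k b)) \<bullet> (r a + r b)
         \<le> (\<Sum>i\<le>n. q i \<bullet> r i)"
proof -
  define D where "D = {..n} - {a,b}"
  define J where "J = {..n} - {b}"
  have "finite D" and "card D < DIM('a)"
    using ab n by (auto simp: D_def card_Diff_subset)
  then obtain u where u: "norm u = 1" "\<And>y. y \<in> span (r ` D) \<Longrightarrow> y \<bullet> u = 0"
    using unit_vector_orthogonal_to_few by metis
  text \<open>Merge the indices a and b into the single index a, carrying the midpoint of k a, k b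
    and the direction r a + r b.\<close>
  define f where "f j = (if j = a then r a + r b else r j)" for j
  define y where "y j = (if j = a then (1/2) *\<^sub>R (k a + k b) else k j)" for j
  define h where "h j = (if j = a then q a \<bullet> r a + q b \<bullet> r b else q j \<bullet> r j)" for j
  have aD: "a \<notin> D"
    by (simp add: D_def)
  have split_all: "sum g {..n} = g a + g b + sum g D"
    and split_J: "sum g J = g a + sum g D" for g :: "nat \<Rightarrow> real"
    unfolding D_def J_def using sum_split_pair[OF ab] by blast+
  have split_all_vec: "sum r {..n} = r a + r b + sum r D"
    and split_J_vec: "sum f J = f a + sum f D"
    unfolding D_def J_def using sum_split_pair[OF ab] by blast+
  have on_D: "sum f D = sum r D" "(\<Sum>j\<in>D. y j \<bullet> f j) = (\<Sum>j\<in>D. k j \<bullet> r j)"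
    "sum h D = (\<Sum>j\<in>D. q j \<bullet> r j)"
    using aD by (auto intro!: sum.cong simp: f_def y_def h_def)
  have merged: "r a + r b = - sum r D"
    using balanced split_all_vec by (simp add: eq_neg_iff_add_eq_0)
  have "(\<Sum>j\<in>J. y j \<bullet> f j) \<le> sum h J"
  proof (rule projection_sum_bound[OF hyp[OF u(1)]])
    show "f j \<bullet> u = 0" if "j \<in> J" for j
    proof (rule u(2))
      have "sum r D \<in> span (r ` D)"
        by (intro span_sum span_base) auto
      then show "f j \<in> span (r ` D)"
        using that merged by (auto simp: f_def J_def D_def span_neg span_base)
    qed
    show "sum f J = 0"
      using split_J_vec on_D(1) merged by (simp add: f_def)
    show "y j \<in> K" if "j \<in> J" for j
    proof (cases "j = a")
      case True
      have "(1/2) *\<^sub>R k a + (1/2) *\<^sub>R k b \<in> K"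
        using convexD[OF cK kK[OF ab(1)] kK[OF ab(2)], of "1/2" "1/2"] by simp
      then show ?thesis
        using True by (simp add: y_def scaleR_right_distrib)
    qed (use that kK in \<open>auto simp: y_def J_def\<close>)
    show "l \<bullet> f j \<le> h j" if "j \<in> J" "l \<in> L" for j l
      using that qmax[OF ab(1) that(2)] qmax[OF ab(2) that(2)] qmax[of j l]
      by (auto simp: f_def h_def J_def inner_add_right)
  qed
  then have "y a \<bullet> f a + (\<Sum>i\<in>D. k i \<bullet> r i) \<le> h a + (\<Sum>i\<in>D. q i \<bullet> r i)"
    unfolding split_J on_D .
  then show ?thesis
    using split_all[of "\<lambda>i. q i \<bullet> r i"] by (simp add: y_def f_def h_def D_def)
qed

text \<open>Averaging the pair estimates over all ordered pairs a \<noteq> b; purely algebraic, using only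
  that the r i sum to zero.\<close>
lemma pair_average:
  fixes k r :: "nat \<Rightarrow> 'a::real_inner"
  assumes balanced: "sum r {..n} = 0"
    and pair: "\<And>a b. a \<le> n \<Longrightarrow> b \<le> n \<Longrightarrow> a \<noteq> b \<Longrightarrow>
      (\<Sum>i\<in>{..n}-{a,b}. k i \<bullet> r i) + ((1/2) *\<^sub>R (k a + k b)) \<bullet> (r a + r b) \<le> Q"
  shows "(real n - 1) * (\<Sum>i\<le>n. k i \<bullet> r i) \<le> real n * Q"
proof -
  define A where "A = (\<Sum>i\<le>n. k i \<bullet> r i)"
  define T where "T a b = A - (k a \<bullet> r a + k b \<bullet> r b) / 2 + (k a \<bullet> r b + k b \<bullet> r a) / 2" for a b
  have T_le: "T a b \<le> Q" if "a \<le> n" "b \<le> n" "a \<noteq> b" for a b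
  proof -
    have "A = k a \<bullet> r a + k b \<bullet> r b + (\<Sum>i\<in>{..n}-{a,b}. k i \<bullet> r i)"
      unfolding A_def by (rule sum_split_pair(1)[OF that])
    moreover have "((1/2) *\<^sub>R (k a + k b)) \<bullet> (r a + r b)
        = (k a \<bullet> r a + k b \<bullet> r b + k a \<bullet> r b + k b \<bullet> r a) / 2"
      by (simp add: inner_add_left inner_add_right field_simps)
    ultimately have "T a b = (\<Sum>i\<in>{..n}-{a,b}. k i \<bullet> r i) + ((1/2) *\<^sub>R (k a + k b)) \<bullet> (r a + r b)"
      unfolding T_def by (simp add: field_simps)
    then show ?thesis
      using pair[OF that] by simp
  qed
  have row: "(\<Sum>b\<le>n. T a b) = (real n + 1) * A - (real n + 1) * (k a \<bullet> r a) / 2 - A / 2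
      + (\<Sum>b\<le>n. k b) \<bullet> r a / 2" for a
  proof -
    have "(\<Sum>b\<le>n. k a \<bullet> r b) = 0" and "(\<Sum>b\<le>n. k b \<bullet> r a) = (\<Sum>b\<le>n. k b) \<bullet> r a"
      using balanced by (simp_all add: inner_sum_right[symmetric] inner_sum_left)
    then show ?thesis
      unfolding T_def A_def
      by (simp add: sum.distrib sum_subtractf add_divide_distrib diff_divide_distrib
          sum_divide_distrib[symmetric] add.commute)
  qed
  have "(\<Sum>a\<le>n. \<Sum>b\<in>{..n}-{a}. T a b) = (\<Sum>a\<le>n. (\<Sum>b\<le>n. T a b) - A)"
    by (intro sum.cong refl) (simp add: sum_diff1 T_def)
  also have "\<dots> = (real n + 1) * ((real n - 1) * A)"
  proof -
    have "(\<Sum>a\<le>n. (\<Sum>b\<le>n. k b) \<bullet> r a) = 0"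
      using balanced by (simp add: inner_sum_right[symmetric])
    then show ?thesis
      unfolding row by (simp add: sum_subtractf sum.distrib sum_divide_distrib[symmetric]
          sum_distrib_left[symmetric] A_def[symmetric] algebra_simps)
  qed
  finally have total: "(\<Sum>a\<le>n. \<Sum>b\<in>{..n}-{a}. T a b) = (real n + 1) * ((real n - 1) * A)" .
  have "(\<Sum>a\<le>n. \<Sum>b\<in>{..n}-{a}. T a b) \<le> (\<Sum>a\<le>n. \<Sum>b\<in>{..n}-{a}. Q)"
    by (intro sum_mono) (auto intro: T_le)
  also have "\<dots> = (real n + 1) * (real n * Q)"
    by simp
  finally show ?thesis
    unfolding total A_def[symmetric] by (simp add: mult_le_cancel_left_pos)
qed

lemma balanced_residuals_vanish:
  fixes K L :: "'a::euclidean_space set" and k q r :: "nat \<Rightarrow> 'a"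
  assumes n: "DIM('a) = n" and n2: "n \<ge> 2"
    and cK: "convex K" and kK: "\<And>i. i \<le> n \<Longrightarrow> k i \<in> K"
    and hyp: "\<And>u. norm u = 1 \<Longrightarrow> contains_translate (proj_hyp u L) (proj_hyp u K)"
    and qmax: "\<And>i l. i \<le> n \<Longrightarrow> l \<in> L \<Longrightarrow> l \<bullet> r i \<le> q i \<bullet> r i"
    and balanced: "sum r {..n} = 0"
    and residual: "\<And>i. i \<le> n \<Longrightarrow> k i + x - r i = (real n / (real n - 1)) *\<^sub>R q i"
  shows "\<forall>i\<le>n. r i = 0"
proof -
  define c where "c = real n / (real n - 1)"
  define E where "E = (\<Sum>i\<le>n. (norm (r i))\<^sup>2)"
  have c: "(real n - 1) * c = real n"
    using n2 by (simp add: c_def)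
  have "(real n - 1) * (\<Sum>i\<le>n. k i \<bullet> r i) \<le> real n * (\<Sum>i\<le>n. q i \<bullet> r i)"
    by (intro pair_average balanced pair_inequality[OF n cK kK hyp qmax balanced]) auto
  also have "\<dots> = (real n - 1) * (c * (\<Sum>i\<le>n. q i \<bullet> r i))"
    using c by (simp add: mult.assoc[symmetric])
  also have "c * (\<Sum>i\<le>n. q i \<bullet> r i) = (\<Sum>i\<le>n. (k i + x - r i) \<bullet> r i)"
    unfolding sum_distrib_left using residual by (intro sum.cong) (simp_all add: c_def)
  also have "\<dots> = (\<Sum>i\<le>n. k i \<bullet> r i) + x \<bullet> sum r {..n} - E"
    by (simp add: E_def inner_diff_left inner_add_left power2_norm_eq_inner sum.distrib
        sum_subtractf inner_sum_right)
  finally have "(real n - 1) * E \<le> 0"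
    using balanced by (simp add: right_diff_distrib)
  moreover have "E \<ge> 0"
    unfolding E_def by (intro sum_nonneg) auto
  ultimately have "E = 0"
    using n2 by (simp add: mult_le_0_iff)
  then show ?thesis
    by (simp add: E_def sum_nonneg_eq_0_iff)
qed

text \<open>The function x \<mapsto> \<Sum>i\<in>I. dist(k i + x, C)^2 attains its minimum when C is compact and
  nonempty: it is continuous and its sublevel sets are bounded.\<close>
lemma sum_sq_infdist_attains_min:
  fixes C :: "'a::euclidean_space set" and k :: "'i \<Rightarrow> 'a"
  assumes C: "compact C" "C \<noteq> {}" and I: "finite I" "i0 \<in> I"
  obtains x where
    "\<And>y. (\<Sum>i\<in>I. (infdist (k i + x) C)\<^sup>2) \<le> (\<Sum>i\<in>I. (infdist (k i + y) C)\<^sup>2)"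
proof -
  define \<Phi> where "\<Phi> x = (\<Sum>i\<in>I. (infdist (k i + x) C)\<^sup>2)" for x
  define S where "S = {x. \<Phi> x \<le> \<Phi> 0}"
  have cont: "continuous_on UNIV \<Phi>"
    unfolding \<Phi>_def by (intro continuous_intros)
  obtain B where B: "\<And>p. p \<in> C \<Longrightarrow> norm p \<le> B"
    using compact_imp_bounded[OF C(1)] unfolding bounded_iff by blast
  text \<open>The sublevel set S is bounded, because already the term of index i0 grows with x.\<close>
  have "S \<subseteq> cball 0 (sqrt (\<Phi> 0) + B + norm (k i0))"
  proof
    fix x assume "x \<in> S"
    have "(infdist (k i0 + x) C)\<^sup>2 \<le> \<Phi> x"
      unfolding \<Phi>_def using I by (intro member_le_sum) auto
    then have d: "infdist (k i0 + x) C \<le> sqrt (\<Phi> 0)"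
      using \<open>x \<in> S\<close> by (intro real_le_rsqrt) (simp add: S_def)
    obtain p where p: "p \<in> C" "infdist (k i0 + x) C = dist (k i0 + x) p"
      using infdist_attains_inf[OF compact_imp_closed[OF C(1)] C(2)] by blast
    have "norm x \<le> norm (k i0 + x - p) + norm p + norm (k i0)"
      using norm_triangle_ineq4[of "(k i0 + x - p) + p" "k i0"] norm_triangle_ineq[of "k i0 + x - p" p]
      by simp
    then show "x \<in> cball 0 (sqrt (\<Phi> 0) + B + norm (k i0))"
      using B[OF p(1)] d p(2) by (simp add: dist_norm)
  qed
  moreover have "closed S"
    unfolding S_def by (rule closed_Collect_le[OF cont continuous_on_const])
  ultimately have "compact S"
    by (metis bounded_cball bounded_subset compact_eq_bounded_closed)
  moreover have "S \<noteq> {}"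
    by (auto simp: S_def)
  ultimately obtain x where "x \<in> S" "\<forall>y\<in>S. \<Phi> x \<le> \<Phi> y"
    using continuous_attains_inf continuous_on_subset[OF cont subset_UNIV] by blast
  then have "\<Phi> x \<le> \<Phi> y" for y
    by (cases "y \<in> S") (auto simp: S_def)
  then show ?thesis
    using that unfolding \<Phi>_def by blast
qed

lemma nearest_residuals_balance:
  fixes C :: "'a::euclidean_space set" and k p :: "'i \<Rightarrow> 'a"
  assumes I: "finite I"
    and min: "\<And>y. (\<Sum>i\<in>I. (infdist (k i + x) C)\<^sup>2) \<le> (\<Sum>i\<in>I. (infdist (k i + y) C)\<^sup>2)"
    and pC: "\<And>i. i \<in> I \<Longrightarrow> p i \<in> C"
    and nearest: "\<And>i. i \<in> I \<Longrightarrow> infdist (k i + x) C = dist (k i + x) (p i)"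
  shows "(\<Sum>i\<in>I. k i + x - p i) = 0"
proof (cases "I = {}")
  case False
  define r where "r i = k i + x - p i" for i
  define R where "R = sum r I"
  define t where "t = 1 / real (card I)"
  have t: "t > 0" "real (card I) * t = 1"
    using False I by (auto simp: t_def)
  have expand: "(norm (r i - t *\<^sub>R R))\<^sup>2 = (norm (r i))\<^sup>2 - 2 * t * (r i \<bullet> R) + t\<^sup>2 * (norm R)\<^sup>2" for i
    unfolding power2_norm_eq_inner
    by (simp add: inner_diff_left inner_diff_right inner_commute algebra_simps power2_eq_square)
  text \<open>Moving x to x - t R with R the sum of the residuals makes the objective at most its minimum minus t |R|^2.\<close>
  have "(\<Sum>i\<in>I. (norm (r i))\<^sup>2) \<le> (\<Sum>i\<in>I. (infdist (k i + (x - t *\<^sub>R R)) C)\<^sup>2)"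
    using min[of "x - t *\<^sub>R R"] nearest by (simp add: r_def dist_norm)
  also have "\<dots> \<le> (\<Sum>i\<in>I. (norm (r i - t *\<^sub>R R))\<^sup>2)"
  proof (rule sum_mono)
    fix i assume "i \<in> I"
    have "dist (k i + (x - t *\<^sub>R R)) (p i) = norm (r i - t *\<^sub>R R)"
      by (simp add: r_def dist_norm algebra_simps)
    then have "infdist (k i + (x - t *\<^sub>R R)) C \<le> norm (r i - t *\<^sub>R R)"
      using infdist_le[OF pC[OF \<open>i \<in> I\<close>]] by metis
    then show "(infdist (k i + (x - t *\<^sub>R R)) C)\<^sup>2 \<le> (norm (r i - t *\<^sub>R R))\<^sup>2"
      by (intro power_mono) (auto simp: infdist_nonneg)
  qed
  also have "\<dots> = (\<Sum>i\<in>I. (norm (r i))\<^sup>2) - 2 * t * (R \<bullet> R) + (real (card I) * t) * (t * (norm R)\<^sup>2)"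
    unfolding expand by (simp add: sum_subtractf sum.distrib sum_distrib_left[symmetric]
        inner_sum_left[symmetric] R_def power2_eq_square algebra_simps)
  finally have "t * (norm R)\<^sup>2 \<le> 0"
    using t(2) by (simp add: power2_norm_eq_inner)
  then have "R = 0"
    using t(1) by (simp add: mult_le_0_iff)
  then show ?thesis
    by (simp add: R_def r_def)
qed simp

lemma nearest_point_support:
  fixes C :: "'a::euclidean_space set"
  assumes "convex C" "closed C" "p \<in> C" "infdist z C = dist z p" "y \<in> C"
  shows "y \<bullet> (z - p) \<le> p \<bullet> (z - p)"
proof -
  have "\<forall>w\<in>C. dist z p \<le> dist z w"
    using assms(4) infdist_le by metis
  then have "(z - p) \<bullet> (y - p) \<le> 0"
    using any_closest_point_dot[OF assms(1-3,5)] by blast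
  then show ?thesis
    by (simp add: inner_diff_right inner_commute)
qed

lemma simplex_translates_into_scaled:
  fixes K L :: "'a::euclidean_space set" and k :: "nat \<Rightarrow> 'a"
  assumes n: "DIM('a) = n" and n2: "n \<ge> 2"
    and cK: "convex K" and L: "compact L" "convex L"
    and hyp: "\<And>u. norm u = 1 \<Longrightarrow> contains_translate (proj_hyp u L) (proj_hyp u K)"
    and kK: "\<And>i. i \<le> n \<Longrightarrow> k i \<in> K"
  shows "\<exists>x. \<forall>i\<le>n. k i + x \<in> (\<lambda>y. (real n / (real n - 1)) *\<^sub>R y) ` L"
proof -
  define c where "c = real n / (real n - 1)"
  define C where "C = (\<lambda>y. c *\<^sub>R y) ` L"
  have "L \<noteq> {}"
  proof -
    obtain u :: 'a where "u \<in> Basis"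
      using nonempty_Basis by blast
    then have "norm u = 1"
      by simp
    then obtain w where "\<And>y f. y \<in> K \<Longrightarrow> f \<bullet> u = 0 \<Longrightarrow> \<exists>l\<in>L. y \<bullet> f + w \<bullet> f = l \<bullet> f"
      using translate_of_projection_inner hyp by metis
    from this[OF kK[OF le0], of 0] show ?thesis
      by auto
  qed
  then have C: "compact C" "convex C" "closed C" "C \<noteq> {}"
    using L by (auto simp: C_def compact_scaling convex_scaling compact_imp_closed)
  obtain x where min: "\<And>y. (\<Sum>i\<le>n. (infdist (k i + x) C)\<^sup>2) \<le> (\<Sum>i\<le>n. (infdist (k i + y) C)\<^sup>2)"
    using sum_sq_infdist_attains_min[OF C(1,4), of "{..n}" 0 k] by auto
  have "\<exists>p. p \<in> C \<and> infdist (k i + x) C = dist (k i + x) p" for i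
    by (rule infdist_attains_inf[OF C(3,4)]) blast
  then obtain p where pC: "\<And>i. p i \<in> C" and nearest: "\<And>i. infdist (k i + x) C = dist (k i + x) (p i)"
    by metis
  have "\<exists>l. l \<in> L \<and> p i = c *\<^sub>R l" for i
    using pC[of i] unfolding C_def by blast
  then obtain q where qL: "\<And>i. q i \<in> L" and pq: "\<And>i. p i = c *\<^sub>R q i"
    by metis
  define r where "r i = k i + x - p i" for i
  have balanced: "sum r {..n} = 0"
    unfolding r_def by (rule nearest_residuals_balance[where k = k and p = p and C = C])
      (use min pC nearest in auto)
  have qmax: "l \<bullet> r i \<le> q i \<bullet> r i" if "l \<in> L" for i l
  proof -
    have "c *\<^sub>R l \<in> C"
      using that unfolding C_def by (rule imageI)
    then have "(c *\<^sub>R l) \<bullet> r i \<le> p i \<bullet> r i"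
      unfolding r_def by (rule nearest_point_support[OF C(2,3) pC nearest])
    then have "c * (l \<bullet> r i) \<le> c * (q i \<bullet> r i)"
      by (simp add: pq)
    moreover have "c > 0"
      using n2 by (simp add: c_def)
    ultimately show ?thesis
      by simp
  qed
  have "\<forall>i\<le>n. r i = 0"
    by (rule balanced_residuals_vanish[OF n n2 cK kK hyp qmax balanced])
      (simp_all add: r_def pq c_def)
  then have "\<forall>i\<le>n. k i + x \<in> C"
    using pC by (simp add: r_def)
  then show ?thesis
    unfolding C_def c_def by blast
qed

text \<open>A hypothesis on (DIM('a) + 1)-tuples of points, which may contain repetitions, covers
  every set of at most DIM('a) + 1 points: enumerate the set and pad by repetition.\<close>
lemma translate_small_subset:
  fixes K C :: "'a::euclidean_space set"
  assumes simplex: "\<And>k. (\<And>i. i \<le> DIM('a) \<Longrightarrow> k i \<in> K) \<Longrightarrow> \<exists>x. \<forall>i\<le>DIM('a). k i + x \<in> C"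
    and S: "finite S" "S \<subseteq> K" "card S \<le> DIM('a) + 1"
  shows "\<exists>x. \<forall>s\<in>S. s + x \<in> C"
proof (cases "S = {}")
  case False
  obtain h where h: "bij_betw h {0..<card S} S"
    using ex_bij_betw_nat_finite[OF S(1)] by blast
  define k where "k i = h (if i < card S then i else 0)" for i
  have "k i \<in> S" for i
    using bij_betw_apply[OF h] False S(1) by (auto simp: k_def card_gt_0_iff)
  then obtain x where x: "\<forall>i\<le>DIM('a). k i + x \<in> C"
    using simplex S(2) by blast
  have "s + x \<in> C" if s: "s \<in> S" for s
  proof -
    obtain j where "j < card S" "s = h j"
      using s h unfolding bij_betw_def by (metis atLeastLessThan_iff imageE)
    then have "j \<le> DIM('a)" "k j = s"
      using S(3) by (auto simp: k_def)
    then show ?thesis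
      using x by metis
  qed
  then show ?thesis
    by blast
qed simp

lemma translate_into_by_Helly:
  fixes K C :: "'a::euclidean_space set"
  assumes C: "compact C" "convex C"
    and simplex: "\<And>k. (\<And>i. i \<le> DIM('a) \<Longrightarrow> k i \<in> K) \<Longrightarrow> \<exists>x. \<forall>i\<le>DIM('a). k i + x \<in> C"
  shows "\<exists>x. (\<lambda>y. y + x) ` K \<subseteq> C"
proof (cases "K = {}")
  case False
  then obtain k0 where k0: "k0 \<in> K"
    by blast
  define g where "g s = {x. s + x \<in> C}" for s
  have g_eq: "g s = (+) (- s) ` C" for s
    unfolding g_def by (auto simp: image_iff algebra_simps)
  have g: "compact (g s)" "convex (g s)" for s
    unfolding g_eq by (rule compact_translation[OF C(1)], rule convex_translation[OF C(2)])
  have few: "\<Inter>G \<noteq> {}" if G: "finite G" "G \<subseteq> g ` K" "card G \<le> DIM('a) + 1" for G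
  proof -
    obtain S where S: "S \<subseteq> K" "inj_on g S" "G = g ` S"
      using G(2) unfolding subset_image_inj by blast
    have "finite S" "card S \<le> DIM('a) + 1"
      using G S by (auto simp: card_image dest: finite_imageD)
    then obtain x where "\<forall>s\<in>S. s + x \<in> C"
      using translate_small_subset[OF simplex] S(1) by blast
    then have "x \<in> \<Inter>G"
      by (simp add: S(3) g_def)
    then show ?thesis
      by blast
  qed
  have finite_meet: "\<Inter>G \<noteq> {}" if G: "finite G" "G \<subseteq> g ` K" for G
  proof (cases "card G \<le> DIM('a) + 1")
    case False
    show ?thesis
    proof (rule Helly)
      show "DIM('a) + 1 \<le> card G" "\<forall>s\<in>G. convex s"
        using False G(2) g(2) by auto
      show "\<Inter>t \<noteq> {}" if "t \<subseteq> G" "card t = DIM('a) + 1" for t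
        using that G by (intro few) (auto intro: finite_subset)
    qed
  qed (use few G in blast)
  have "g k0 \<inter> \<Inter>(g ` K) \<noteq> {}"
  proof (rule compact_imp_fip[OF g(1)])
    show "closed T" if "T \<in> g ` K" for T
      using that g(1) compact_imp_closed by blast
    show "g k0 \<inter> \<Inter>F \<noteq> {}" if "finite F" "F \<subseteq> g ` K" for F
      using finite_meet[of "insert (g k0) F"] that k0 by auto
  qed
  then show ?thesis
    by (auto simp: g_def)
qed simp

theorem mainTheorem8:
  fixes K L :: "'a::euclidean_space set"
  assumes "DIM('a) \<ge> 2"
    and "compact K" and "convex K" and "compact L" and "convex L"
    and "\<And>u. norm u = 1 \<Longrightarrow> contains_translate (proj_hyp u L) (proj_hyp u K)"
  shows "\<exists>x. (\<lambda>y. y + x) ` K \<subseteq>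
           (\<lambda>y. (real DIM('a) / (real DIM('a) - 1)) *\<^sub>R y) ` L"
proof (rule translate_into_by_Helly)
  show "compact ((\<lambda>y. (real DIM('a) / (real DIM('a) - 1)) *\<^sub>R y) ` L)"
    and "convex ((\<lambda>y. (real DIM('a) / (real DIM('a) - 1)) *\<^sub>R y) ` L)"
    using assms(4,5) by (auto intro: compact_scaling convex_scaling)
  show "\<exists>x. \<forall>i\<le>DIM('a). k i + x \<in> (\<lambda>y. (real DIM('a) / (real DIM('a) - 1)) *\<^sub>R y) ` L"
    if "\<And>i. i \<le> DIM('a) \<Longrightarrow> k i \<in> K" for k
    by (rule simplex_translates_into_scaled[OF refl assms(1) assms(3-6) that])
qed

end
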